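(* Let $U\in\mathbb{N}$ and $a_1,a_2,b_1,b_2\in\mathbb{Q}_U[\mathbf{i}]$ with $a_1\neq a_2$ and $b_1\neq b_2$. If there exist $\rho,t\in\mathbb{C}$ with $|\rho|=1$ and $b_j=\rho a_j+t$ for $j\in\{1,2\}$, then $\rho\in\mathbb{Q}_{2^{10}U^{16}}[\mathbf{i}]$ and $t\in\mathbb{Q}_{2^{22}U^{35}}[\mathbf{i}]$.
   Context: For $V\in\mathbb{N}$, $\mathbb{Q}_V=\{\pm p/q: p,q\in\{1,\dots,V\}\}\cup\{0\}$ and $\mathbb{Q}_V[\mathbf{i}]=\{x+y\mathbf{i}: x,y\in\mathbb{Q}_V\}$. *)

theory Defs
  imports "HOL-Analysis.Analysis"
begin

definition QV :: "nat \<Rightarrow> real set" where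
  "QV V = {x. x = 0 \<or> (\<exists>p\<in>{1..V}. \<exists>q\<in>{1..V}. x = real p / real q \<or> x = - (real p / real q))}"

definition QVi :: "nat \<Rightarrow> complex set" where
  "QVi V = {z. Re z \<in> QV V \<and> Im z \<in> QV V}"

end

theory Submission
  imports Defs
begin

text \<open>
  The real and imaginary parts of the
  data are fractions \<open>n / d\<close> with \<open>|n| \<le> U\<close> and \<open>1 \<le> d \<le> U\<close>; bounding numerators and
  denominators separately, these bounds propagate through sums, products and quotients
  (using \<open>z / w = z * cnj w / |w|\<^sup>2\<close> for the complex quotient), and the final bounds are
  coarsened to the form \<open>Q\<^sub>V\<close>.
\<close>

definition bounded_fracs :: "nat \<Rightarrow> nat \<Rightarrow> real set" where
  "bounded_fracs N D =
     {x. \<exists>n::int. \<exists>d::nat. x = of_int n / of_nat d \<and> \<bar>n\<bar> \<le> int N \<and> 1 \<le> d \<and> d \<le> D}"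

lemma bounded_fracsI:
  "\<bar>n\<bar> \<le> int N \<Longrightarrow> 1 \<le> d \<Longrightarrow> d \<le> D \<Longrightarrow> x = of_int n / of_nat d \<Longrightarrow> x \<in> bounded_fracs N D"
  unfolding bounded_fracs_def by blast

lemma bounded_fracsE:
  assumes "x \<in> bounded_fracs N D"
  obtains n :: int and d :: nat
  where "x = of_int n / of_nat d" "\<bar>n\<bar> \<le> int N" "1 \<le> d" "d \<le> D"
  using assms unfolding bounded_fracs_def by blast

lemma QV_subset_bounded_fracs:
  assumes "1 \<le> U"
  shows "QV U \<subseteq> bounded_fracs U U"
proof
  fix x assume "x \<in> QV U"
  then consider "x = 0"
    | p q where "p \<in> {1..U}" "q \<in> {1..U}" "x = real p / real q \<or> x = - (real p / real q)"
    unfolding QV_def by blast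
  then show "x \<in> bounded_fracs U U"
  proof cases
    case 1
    then show ?thesis using assms by (intro bounded_fracsI[of 0 _ 1]) auto
  next
    case 2
    then show ?thesis
      by (auto intro: bounded_fracsI[of "int p" _ q] bounded_fracsI[of "- int p" _ q])
  qed
qed

lemma bounded_fracs_subset_QV:
  assumes "N \<le> V" "D \<le> V"
  shows "bounded_fracs N D \<subseteq> QV V"
proof
  fix x assume "x \<in> bounded_fracs N D"
  then obtain n :: int and d :: nat
    where x: "x = of_int n / of_nat d" "\<bar>n\<bar> \<le> int N" "1 \<le> d" "d \<le> D"
    by (rule bounded_fracsE)
  have d: "d \<in> {1..V}" using x assms by auto
  consider "n = 0" | "n > 0" | "n < 0" by linarith
  then show "x \<in> QV V"
  proof cases
    case 1
    then show ?thesis using x unfolding QV_def by simp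
  next
    case 2
    then have "x = real (nat n) / real d" "nat n \<in> {1..V}" using x assms by auto
    then show ?thesis using d unfolding QV_def by blast
  next
    case 3
    then have "x = - (real (nat (- n)) / real d)" "nat (- n) \<in> {1..V}" using x assms by auto
    then show ?thesis using d unfolding QV_def by blast
  qed
qed

lemma bounded_fracs_uminus:
  "x \<in> bounded_fracs N D \<Longrightarrow> - x \<in> bounded_fracs N D"
  by (erule bounded_fracsE) (auto intro: bounded_fracsI[of "- _"])

lemma bounded_fracs_add:
  assumes "x \<in> bounded_fracs N1 D1" "y \<in> bounded_fracs N2 D2"
  shows "x + y \<in> bounded_fracs (N1 * D2 + N2 * D1) (D1 * D2)"
proof -
  obtain n1 :: int and d1 :: nat
    where x: "x = of_int n1 / of_nat d1" "\<bar>n1\<bar> \<le> int N1" "1 \<le> d1" "d1 \<le> D1"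
    using assms(1) by (rule bounded_fracsE)
  obtain n2 :: int and d2 :: nat
    where y: "y = of_int n2 / of_nat d2" "\<bar>n2\<bar> \<le> int N2" "1 \<le> d2" "d2 \<le> D2"
    using assms(2) by (rule bounded_fracsE)
  have "\<bar>n1 * int d2\<bar> \<le> int N1 * int D2" "\<bar>n2 * int d1\<bar> \<le> int N2 * int D1"
    using x y by (simp_all add: abs_mult mult_mono)
  then have "\<bar>n1 * int d2 + n2 * int d1\<bar> \<le> int (N1 * D2 + N2 * D1)"
    by simp
  moreover have "x + y = of_int (n1 * int d2 + n2 * int d1) / of_nat (d1 * d2)"
    using x y by (simp add: field_simps)
  moreover have "d1 * d2 \<le> D1 * D2"
    using x y by (simp add: mult_le_mono)
  ultimately show ?thesis
    using x y by (intro bounded_fracsI) auto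
qed

lemma bounded_fracs_diff:
  "x \<in> bounded_fracs N1 D1 \<Longrightarrow> y \<in> bounded_fracs N2 D2 \<Longrightarrow>
    x - y \<in> bounded_fracs (N1 * D2 + N2 * D1) (D1 * D2)"
  using bounded_fracs_add[of x N1 D1 "- y"] by (simp add: bounded_fracs_uminus)

lemma bounded_fracs_mult:
  assumes "x \<in> bounded_fracs N1 D1" "y \<in> bounded_fracs N2 D2"
  shows "x * y \<in> bounded_fracs (N1 * N2) (D1 * D2)"
proof -
  obtain n1 :: int and d1 :: nat
    where x: "x = of_int n1 / of_nat d1" "\<bar>n1\<bar> \<le> int N1" "1 \<le> d1" "d1 \<le> D1"
    using assms(1) by (rule bounded_fracsE)
  obtain n2 :: int and d2 :: nat
    where y: "y = of_int n2 / of_nat d2" "\<bar>n2\<bar> \<le> int N2" "1 \<le> d2" "d2 \<le> D2"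
    using assms(2) by (rule bounded_fracsE)
  have "\<bar>n1 * n2\<bar> \<le> int (N1 * N2)"
    using x y by (simp add: abs_mult mult_mono)
  then show ?thesis
    using x y by (intro bounded_fracsI[of "n1 * n2" _ "d1 * d2"]) (auto intro: mult_le_mono)
qed

lemma bounded_fracs_inverse:
  assumes "y \<in> bounded_fracs N D" "y \<noteq> 0"
  shows "inverse y \<in> bounded_fracs D N"
proof -
  obtain n :: int and d :: nat
    where y: "y = of_int n / of_nat d" "\<bar>n\<bar> \<le> int N" "1 \<le> d" "d \<le> D"
    using assms(1) by (rule bounded_fracsE)
  have "n \<noteq> 0" using assms(2) y by auto
  then have "inverse y = of_int (sgn n * int d) / of_nat (nat \<bar>n\<bar>)"
    unfolding y(1) by (cases "n > 0") (auto simp: field_simps)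
  then show ?thesis
    using y \<open>n \<noteq> 0\<close> by (intro bounded_fracsI[of "sgn n * int d" D "nat \<bar>n\<bar>" N]) (auto simp: abs_mult)
qed

lemma bounded_fracs_divide:
  "x \<in> bounded_fracs N1 D1 \<Longrightarrow> y \<in> bounded_fracs N2 D2 \<Longrightarrow> y \<noteq> 0 \<Longrightarrow>
    x / y \<in> bounded_fracs (N1 * D2) (D1 * N2)"
  unfolding divide_inverse by (intro bounded_fracs_mult bounded_fracs_inverse)

lemma bounded_fracs_weaken:
  "x \<in> bounded_fracs N D \<Longrightarrow> N \<le> N' \<Longrightarrow> D \<le> D' \<Longrightarrow> x \<in> bounded_fracs N' D'"
  unfolding bounded_fracs_def by force

lemma bounded_fracs_sum_of_products:
  assumes "x1 \<in> bounded_fracs N1 D1" "x2 \<in> bounded_fracs N1 D1"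
    and "y1 \<in> bounded_fracs N2 D2" "y2 \<in> bounded_fracs N2 D2"
  shows "x1 * y1 + x2 * y2 \<in> bounded_fracs (2 * N1 * N2 * D1 * D2) ((D1 * D2)\<^sup>2)"
proof -
  have "x1 * y1 + x2 * y2 \<in> bounded_fracs (N1 * N2 * (D1 * D2) + N1 * N2 * (D1 * D2)) (D1 * D2 * (D1 * D2))"
    using assms by (intro bounded_fracs_add bounded_fracs_mult)
  then show ?thesis
    by (rule bounded_fracs_weaken) (simp_all add: power2_eq_square)
qed

lemma bounded_fracs_diff_of_products:
  assumes "x1 \<in> bounded_fracs N1 D1" "x2 \<in> bounded_fracs N1 D1"
    and "y1 \<in> bounded_fracs N2 D2" "y2 \<in> bounded_fracs N2 D2"
  shows "x1 * y1 - x2 * y2 \<in> bounded_fracs (2 * N1 * N2 * D1 * D2) ((D1 * D2)\<^sup>2)"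
proof -
  have "x1 * y1 - x2 * y2 \<in> bounded_fracs (N1 * N2 * (D1 * D2) + N1 * N2 * (D1 * D2)) (D1 * D2 * (D1 * D2))"
    using assms by (intro bounded_fracs_diff bounded_fracs_mult)
  then show ?thesis
    by (rule bounded_fracs_weaken) (simp_all add: power2_eq_square)
qed

definition bounded_cfracs :: "nat \<Rightarrow> nat \<Rightarrow> complex set" where
  "bounded_cfracs N D = {z. Re z \<in> bounded_fracs N D \<and> Im z \<in> bounded_fracs N D}"

lemma QVi_subset_bounded_cfracs: "1 \<le> U \<Longrightarrow> QVi U \<subseteq> bounded_cfracs U U"
  unfolding QVi_def bounded_cfracs_def using QV_subset_bounded_fracs by blast

lemma bounded_cfracs_subset_QVi: "N \<le> V \<Longrightarrow> D \<le> V \<Longrightarrow> bounded_cfracs N D \<subseteq> QVi V"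
  unfolding QVi_def bounded_cfracs_def using bounded_fracs_subset_QV by blast

lemma bounded_cfracs_diff:
  "z \<in> bounded_cfracs N1 D1 \<Longrightarrow> w \<in> bounded_cfracs N2 D2 \<Longrightarrow>
    z - w \<in> bounded_cfracs (N1 * D2 + N2 * D1) (D1 * D2)"
  unfolding bounded_cfracs_def by (simp add: bounded_fracs_diff)

lemma bounded_cfracs_mult:
  assumes "z \<in> bounded_cfracs N1 D1" "w \<in> bounded_cfracs N2 D2"
  shows "z * w \<in> bounded_cfracs (2 * N1 * N2 * D1 * D2) ((D1 * D2)\<^sup>2)"
  using assms unfolding bounded_cfracs_def
  by (simp add: bounded_fracs_sum_of_products bounded_fracs_diff_of_products)

lemma bounded_cfracs_divide:
  assumes "z \<in> bounded_cfracs N1 D1" "w \<in> bounded_cfracs N2 D2" "w \<noteq> 0"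
  shows "z / w \<in> bounded_cfracs (2 * N1 * N2 * D1 * D2 ^ 5) (2 * N2\<^sup>2 * D1\<^sup>2 * D2 ^ 4)"
proof -
  have z: "Re z \<in> bounded_fracs N1 D1" "Im z \<in> bounded_fracs N1 D1"
    and w: "Re w \<in> bounded_fracs N2 D2" "Im w \<in> bounded_fracs N2 D2"
    using assms(1,2) unfolding bounded_cfracs_def by auto
  have q: "(Re w)\<^sup>2 + (Im w)\<^sup>2 \<in> bounded_fracs (2 * N2 * N2 * D2 * D2) ((D2 * D2)\<^sup>2)"
    using bounded_fracs_sum_of_products[OF w w] by (simp add: power2_eq_square)
  have q_nonzero: "(Re w)\<^sup>2 + (Im w)\<^sup>2 \<noteq> 0"
    using assms(3) by (simp add: complex_eq_iff)
  have re: "Re z * Re w + Im z * Im w \<in> bounded_fracs (2 * N1 * N2 * D1 * D2) ((D1 * D2)\<^sup>2)"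
    using z w by (rule bounded_fracs_sum_of_products)
  have im: "Im z * Re w - Re z * Im w \<in> bounded_fracs (2 * N1 * N2 * D1 * D2) ((D1 * D2)\<^sup>2)"
    using z w by (intro bounded_fracs_diff_of_products)
  have bounds: "2 * N1 * N2 * D1 * D2 * (D2 * D2)\<^sup>2 = 2 * N1 * N2 * D1 * D2 ^ 5"
    "(D1 * D2)\<^sup>2 * (2 * N2 * N2 * D2 * D2) = 2 * N2\<^sup>2 * D1\<^sup>2 * D2 ^ 4"
    by (simp_all add: algebra_simps power2_eq_square eval_nat_numeral)
  show ?thesis
    unfolding bounded_cfracs_def mem_Collect_eq Re_divide Im_divide bounds[symmetric]
    using re im by (intro conjI bounded_fracs_divide q q_nonzero)
qed

lemma rotation_bounded_cfracs:
  assumes "a1 \<in> bounded_cfracs U U" "a2 \<in> bounded_cfracs U U"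
    and "b1 \<in> bounded_cfracs U U" "b2 \<in> bounded_cfracs U U"
    and "a1 \<noteq> a2" "b1 = \<rho> * a1 + t" "b2 = \<rho> * a2 + t"
  shows "\<rho> \<in> bounded_cfracs (8 * U^16) (8 * U^16)"
proof -
  have "a1 - a2 \<in> bounded_cfracs (2 * U^2) (U^2)" "b1 - b2 \<in> bounded_cfracs (2 * U^2) (U^2)"
    using bounded_cfracs_diff[OF assms(1,2)] bounded_cfracs_diff[OF assms(3,4)]
    by (simp_all add: power2_eq_square mult_2)
  then have "(b1 - b2) / (a1 - a2) \<in>
      bounded_cfracs (2 * (2 * U^2) * (2 * U^2) * U^2 * (U^2)^5) (2 * (2 * U^2)^2 * (U^2)^2 * (U^2)^4)"
    using assms(5) by (intro bounded_cfracs_divide) auto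
  also have "(b1 - b2) / (a1 - a2) = \<rho>"
    using assms(5-7) by (simp add: field_simps)
  also have "2 * (2 * U^2) * (2 * U^2) * U^2 * (U^2)^5 = 8 * U^16"
    by algebra
  also have "2 * (2 * U^2)^2 * (U^2)^2 * (U^2)^4 = 8 * U^16"
    by algebra
  finally show ?thesis .
qed

lemma translation_bounded_cfracs:
  assumes "\<rho> \<in> bounded_cfracs (8 * U^16) (8 * U^16)"
    and "a \<in> bounded_cfracs U U" "b \<in> bounded_cfracs U U" "b = \<rho> * a + t"
  shows "t \<in> bounded_cfracs (192 * U^35) (64 * U^35)"
proof -
  have "b - \<rho> * a \<in> bounded_cfracs
      (U * (8 * U^16 * U)^2 + 2 * (8 * U^16) * U * (8 * U^16) * U * U) (U * (8 * U^16 * U)^2)"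
    using assms(3) bounded_cfracs_mult[OF assms(1,2)] by (rule bounded_cfracs_diff)
  also have "b - \<rho> * a = t"
    using assms(4) by simp
  also have "U * (8 * U^16 * U)^2 + 2 * (8 * U^16) * U * (8 * U^16) * U * U = 192 * U^35"
    by algebra
  also have "U * (8 * U^16 * U)^2 = 64 * U^35"
    by algebra
  finally show ?thesis .
qed

theorem corollary2p3:
  fixes U :: nat and a1 a2 b1 b2 \<rho> t :: complex
  assumes "a1 \<in> QVi U" "a2 \<in> QVi U" "b1 \<in> QVi U" "b2 \<in> QVi U"
    and "a1 \<noteq> a2" "b1 \<noteq> b2"
    and "cmod \<rho> = 1" "b1 = \<rho> * a1 + t" "b2 = \<rho> * a2 + t"
  shows "\<rho> \<in> QVi (2^10 * U^16) \<and> t \<in> QVi (2^22 * U^35)"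
proof -
  \<comment> \<open>\<open>QVi 0 = {0}\<close>, so \<open>a1 \<noteq> a2\<close> excludes \<open>U = 0\<close>, where \<open>bounded_cfracs 0 0\<close> would be empty.\<close>
  have "U \<noteq> 0"
    using assms(1,2,5) by (auto simp: QVi_def QV_def complex_eq_iff)
  then have a: "a1 \<in> bounded_cfracs U U" "a2 \<in> bounded_cfracs U U"
    and b: "b1 \<in> bounded_cfracs U U" "b2 \<in> bounded_cfracs U U"
    using assms(1-4) QVi_subset_bounded_cfracs[of U] by auto
  have \<rho>: "\<rho> \<in> bounded_cfracs (8 * U^16) (8 * U^16)"
    using a b assms(5,8,9) by (rule rotation_bounded_cfracs)
  have t: "t \<in> bounded_cfracs (192 * U^35) (64 * U^35)"
    using \<rho> a(1) b(1) assms(8) by (rule translation_bounded_cfracs)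
  show ?thesis
    by (intro conjI bounded_cfracs_subset_QVi[THEN subsetD, OF _ _ \<rho>]
        bounded_cfracs_subset_QVi[THEN subsetD, OF _ _ t]) simp_all
qed

end
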